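(* In qubit quantum theory, let $M=\hat n\cdot\vec\sigma$ and $M'=\hat n'\cdot\vec\sigma$ be the $\pm1$-valued projective measurements along unit Bloch vectors $\hat n,\hat n'\in\mathbb{R}^3$, where $\vec\sigma=(\sigma_x,\sigma_y,\sigma_z)$ are the Pauli matrices. Then every qubit state (density operator) satisfies the $A_1^2$-orbit-realizability condition relative to $M$ and $M'$ if and only if $\hat n\cdot\hat n'=0$.
   Context: For a qubit density operator $\rho$ and a $\pm1$-valued observable $M$, $\langle M\rangle_\rho=\mathrm{tr}(M\rho)$. A state $\rho_1$ satisfies the $A_1^2$-orbit-realizability condition relative to $M,M'$ if there exist qubit density operators $\rho_2,\rho_3,\rho_4$ with $\langle M\rangle_{\rho_1}=\langle M\rangle_{\rho_2}=-\langle M\rangle_{\rho_3}=-\langle M\rangle_{\rho_4}$, $\langle M'\rangle_{\rho_1}=-\langle M'\rangle_{\rho_2}=-\langle M'\rangle_{\rho_3}=\langle M'\rangle_{\rho_4}$, and $\tfrac12\rho_1+\tfrac12\rho_3=\tfrac12\rho_2+\tfrac12\rho_4$. *)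

theory Defs
  imports "HOL-Analysis.Analysis"
begin

type_synonym qop = "complex^2^2"

definition sigma_x :: qop where
  "sigma_x = (\<chi> i j. if i \<noteq> j then 1 else 0)"

definition sigma_y :: qop where
  "sigma_y = (\<chi> i j. if i = 1 \<and> j = 2 then - \<i> else if i = 2 \<and> j = 1 then \<i> else 0)"

definition sigma_z :: qop where
  "sigma_z = (\<chi> i j. if i = j then (if i = 1 then 1 else -1) else 0)"

definition bloch_obs :: "real^3 \<Rightarrow> qop" where
  "bloch_obs n = (\<chi> i j. complex_of_real (n$1) * sigma_x$i$j
                        + complex_of_real (n$2) * sigma_y$i$j
                        + complex_of_real (n$3) * sigma_z$i$j)"

definition qtrace :: "qop \<Rightarrow> complex" where
  "qtrace A = (\<Sum>i\<in>UNIV. A$i$i)"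

definition hermitian :: "qop \<Rightarrow> bool" where
  "hermitian A \<longleftrightarrow> (\<forall>i j. A$i$j = cnj (A$j$i))"

definition psd :: "qop \<Rightarrow> bool" where
  "psd A \<longleftrightarrow> (\<forall>v::complex^2. let q = (\<Sum>i\<in>UNIV. \<Sum>j\<in>UNIV. cnj (v$i) * A$i$j * v$j)
                               in Im q = 0 \<and> Re q \<ge> 0)"

definition qubit_state :: "qop \<Rightarrow> bool" where
  "qubit_state \<rho> \<longleftrightarrow> hermitian \<rho> \<and> psd \<rho> \<and> qtrace \<rho> = 1"

definition expect :: "qop \<Rightarrow> qop \<Rightarrow> complex" where
  "expect M \<rho> = qtrace (M ** \<rho>)"

definition A12_orbit_realizable :: "qop \<Rightarrow> qop \<Rightarrow> qop \<Rightarrow> bool" where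
  "A12_orbit_realizable M M' \<rho>1 \<longleftrightarrow>
     (\<exists>\<rho>2 \<rho>3 \<rho>4. qubit_state \<rho>2 \<and> qubit_state \<rho>3 \<and> qubit_state \<rho>4 \<and>
        expect M \<rho>1 = expect M \<rho>2 \<and> expect M \<rho>2 = - expect M \<rho>3 \<and> - expect M \<rho>3 = - expect M \<rho>4 \<and>
        expect M' \<rho>1 = - expect M' \<rho>2 \<and> - expect M' \<rho>2 = - expect M' \<rho>3 \<and> - expect M' \<rho>3 = expect M' \<rho>4 \<and>
        (1/2) *\<^sub>R \<rho>1 + (1/2) *\<^sub>R \<rho>3 = (1/2) *\<^sub>R \<rho>2 + (1/2) *\<^sub>R \<rho>4)"

end

theory Submission
  imports Defs
begin

text \<open>Via the Bloch parametrisation \<open>\<rho> = (I + r\<cdot>\<sigma>)/2\<close>, qubit states correspond to the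
  closed unit ball of \<open>\<real>\<^sup>3\<close>, the parametrisation is affine, and \<open>\<langle>n\<cdot>\<sigma>\<rangle>\<^sub>\<rho> = n\<cdot>r\<close>.
  If \<open>n \<bottom> n'\<close>, the states \<open>\<rho>\<^sub>2, \<rho>\<^sub>3, \<rho>\<^sub>4\<close> are obtained by reflecting \<open>r\<close> in the planes
  orthogonal to \<open>n'\<close>, to both, and to \<open>n\<close>; the four points form a parallelogram.
  Conversely, for the pure state \<open>r = n\<close> the only state with \<open>\<langle>M\<rangle> = 1\<close> is \<open>\<rho>\<^sub>1\<close> itself,
  so \<open>\<langle>M'\<rangle> = -\<langle>M'\<rangle>\<close> at \<open>\<rho>\<^sub>1\<close>, i.e. \<open>n\<cdot>n' = 0\<close>.\<close>

lemma inner_vec3: "(x::real^3) \<bullet> y = x$1 * y$1 + x$2 * y$2 + x$3 * y$3"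
  by (simp add: inner_vec_def sum_3)

lemma norm_vec3_sq: "(norm (r::real^3))\<^sup>2 = (r$1)\<^sup>2 + (r$2)\<^sup>2 + (r$3)\<^sup>2"
  unfolding power2_norm_eq_inner inner_vec3 by (simp add: power2_eq_square)

lemma eq_of_inner_eq_one:
  fixes x y :: "'a::real_inner"
  assumes "norm x \<le> 1" and "norm y = 1" and "y \<bullet> x = 1"
  shows "x = y"
proof -
  have "(norm (x - y))\<^sup>2 = (norm x)\<^sup>2 - 2 * (y \<bullet> x) + (norm y)\<^sup>2"
    by (simp add: power2_norm_eq_inner inner_diff inner_commute)
  also have "\<dots> \<le> 0" using assms by (simp add: power_le_one)
  finally show "x = y" by simp
qed

definition reflect :: "'a::real_inner \<Rightarrow> 'a \<Rightarrow> 'a" where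
  "reflect u r = r - (2 * (u \<bullet> r)) *\<^sub>R u"

lemma inner_reflect_self: "norm u = 1 \<Longrightarrow> u \<bullet> reflect u r = - (u \<bullet> r)"
  by (simp add: reflect_def inner_diff_right dot_square_norm)

lemma inner_reflect_orthogonal: "v \<bullet> u = 0 \<Longrightarrow> v \<bullet> reflect u r = v \<bullet> r"
  by (simp add: reflect_def inner_diff_right)

lemma norm_reflect: "norm u = 1 \<Longrightarrow> norm (reflect u r) = norm r"
proof -
  assume "norm u = 1"
  then have "u \<bullet> u = 1" by (simp add: dot_square_norm)
  then have "(norm (reflect u r))\<^sup>2 = (norm r)\<^sup>2"
    by (simp add: power2_norm_eq_inner reflect_def inner_diff_left inner_diff_right
        inner_commute[of r u] algebra_simps)
  then show ?thesis by simp
qed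

lemma reflect_parallelogram:
  assumes "u \<bullet> v = 0"
  shows "r + reflect u (reflect v r) = reflect v r + reflect u r"
  using assms by (simp add: reflect_def inner_diff_right algebra_simps)

definition bloch_state :: "real^3 \<Rightarrow> qop" where
  "bloch_state r = (\<chi> i j. if i = 1 then (if j = 1 then complex_of_real ((1 + r$3)/2)
       else (complex_of_real (r$1) - \<i> * complex_of_real (r$2))/2)
     else (if j = 1 then (complex_of_real (r$1) + \<i> * complex_of_real (r$2))/2
       else complex_of_real ((1 - r$3)/2)))"

lemma bloch_state_nth:
  "bloch_state r $ 1 $ 1 = complex_of_real ((1 + r$3)/2)"
  "bloch_state r $ 1 $ 2 = (complex_of_real (r$1) - \<i> * complex_of_real (r$2))/2"
  "bloch_state r $ 2 $ 1 = (complex_of_real (r$1) + \<i> * complex_of_real (r$2))/2"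
  "bloch_state r $ 2 $ 2 = complex_of_real ((1 - r$3)/2)"
  by (simp_all add: bloch_state_def)

lemma expect_bloch_obs_bloch_state:
  "expect (bloch_obs n) (bloch_state r) = complex_of_real (n \<bullet> r)"
  by (simp add: expect_def qtrace_def matrix_matrix_mult_def sum_2 bloch_obs_def
      sigma_x_def sigma_y_def sigma_z_def bloch_state_nth inner_vec3 complex_eq_iff field_simps)

lemma bloch_state_midpoint:
  assumes "r1 + r3 = r2 + r4"
  shows "(1/2) *\<^sub>R bloch_state r1 + (1/2) *\<^sub>R bloch_state r3
       = (1/2) *\<^sub>R bloch_state r2 + (1/2) *\<^sub>R bloch_state r4"
proof -
  have r1: "r1$k = r2$k + r4$k - r3$k" for k
    using assms by (metis add_diff_cancel vector_add_component)
  show ?thesis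
    unfolding vec_eq_iff forall_2
    by (simp add: r1 bloch_state_nth complex_eq_iff field_simps scaleR_conv_of_real)
qed

lemma psd_quadratic_form:
  assumes "psd A"
  shows "0 \<le> Re (cnj v1 * A$1$1 * v1 + cnj v1 * A$1$2 * v2 + cnj v2 * A$2$1 * v1 + cnj v2 * A$2$2 * v2)"
proof -
  define v :: "complex^2" where "v = (\<chi> k. if k = 1 then v1 else v2)"
  have "0 \<le> Re (\<Sum>i\<in>UNIV. \<Sum>j\<in>UNIV. cnj (v$i) * A$i$j * v$j)"
    using assms unfolding psd_def Let_def by blast
  then show ?thesis by (simp add: v_def sum_2)
qed

text \<open>Completing the square after multiplying by \<open>p\<close>, resp. \<open>q\<close>,
  leaves the determinant \<open>pq - |w|\<^sup>2\<close> as the only non-square term.\<close>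
lemma hermitian_form_nonneg:
  fixes p q wr wi :: real
  assumes "0 \<le> p" "0 \<le> q" "wr\<^sup>2 + wi\<^sup>2 \<le> p * q"
  shows "0 \<le> p * (a\<^sup>2 + b\<^sup>2) + q * (c\<^sup>2 + d\<^sup>2) + 2 * (wr * (a*c + b*d) - wi * (a*d - b*c))"
    (is "0 \<le> ?Q")
proof (cases "p = 0 \<and> q = 0")
  case True
  with assms(3) have "wr = 0 \<and> wi = 0" by (simp add: sum_power2_le_zero_iff)
  with True show ?thesis by simp
next
  case False
  have "p * ?Q = (p*a + wr*c - wi*d)\<^sup>2 + (p*b + wr*d + wi*c)\<^sup>2 + (p*q - wr\<^sup>2 - wi\<^sup>2) * (c\<^sup>2 + d\<^sup>2)"
    and "q * ?Q = (q*c + wr*a + wi*b)\<^sup>2 + (q*d + wr*b - wi*a)\<^sup>2 + (p*q - wr\<^sup>2 - wi\<^sup>2) * (a\<^sup>2 + b\<^sup>2)"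
    by (simp_all add: power2_eq_square algebra_simps)
  then have "0 \<le> p * ?Q" and "0 \<le> q * ?Q"
    using assms by (auto intro!: add_nonneg_nonneg mult_nonneg_nonneg)
  then have "0 \<le> (p + q) * ?Q" by (simp add: distrib_right)
  moreover have "0 < p + q" using False assms by linarith
  ultimately show ?thesis by (simp add: zero_le_mult_iff)
qed

lemma qubit_state_bloch_state:
  assumes "norm r \<le> 1"
  shows "qubit_state (bloch_state r)"
proof -
  have ball: "(r$1)\<^sup>2 + (r$2)\<^sup>2 + (r$3)\<^sup>2 \<le> 1"
    using assms norm_vec3_sq[of r] by (metis norm_ge_zero power_le_one)
  then have "(r$3)\<^sup>2 \<le> 1"
    using zero_le_power2[of "r$1"] zero_le_power2[of "r$2"] by linarith
  then have "\<bar>r$3\<bar> \<le> 1"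
    by (simp add: abs_square_le_1)
  then have diag: "0 \<le> (1 + r$3)/2" "0 \<le> (1 - r$3)/2"
    by auto
  have offdiag: "(r$1/2)\<^sup>2 + (-(r$2)/2)\<^sup>2 \<le> (1 + r$3)/2 * ((1 - r$3)/2)"
    using ball by (simp add: power2_eq_square field_simps)
  have "psd (bloch_state r)"
    unfolding psd_def Let_def
  proof
    fix v :: "complex^2"
    obtain a b c d where v: "v$1 = Complex a b" "v$2 = Complex c d"
      by (metis complex.exhaust)
    let ?q = "\<Sum>i\<in>UNIV. \<Sum>j\<in>UNIV. cnj (v$i) * bloch_state r $ i $ j * v$j"
    have Re_q: "Re ?q = (1 + r$3)/2 * (a\<^sup>2 + b\<^sup>2) + (1 - r$3)/2 * (c\<^sup>2 + d\<^sup>2)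
        + 2 * (r$1/2 * (a*c + b*d) - (-(r$2)/2) * (a*d - b*c))"
      by (simp add: sum_2 bloch_state_nth v field_simps power2_eq_square)
    have "0 \<le> Re ?q"
      unfolding Re_q by (rule hermitian_form_nonneg[OF diag offdiag])
    moreover have "Im ?q = 0"
      by (simp add: sum_2 bloch_state_nth v field_simps)
    ultimately show "Im ?q = 0 \<and> 0 \<le> Re ?q" by simp
  qed
  moreover have "hermitian (bloch_state r)"
    unfolding hermitian_def by (simp add: forall_2 bloch_state_nth complex_eq_iff)
  moreover have "qtrace (bloch_state r) = 1"
    unfolding qtrace_def by (simp add: sum_2 bloch_state_nth complex_eq_iff field_simps)
  ultimately show ?thesis by (simp add: qubit_state_def)
qed

lemma qubit_state_obtain_bloch_vector:
  assumes "qubit_state \<rho>"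
  obtains r where "norm r \<le> 1" and "\<rho> = bloch_state r"
proof -
  have H: "hermitian \<rho>" and P: "psd \<rho>" and T: "qtrace \<rho> = 1"
    using assms by (auto simp: qubit_state_def)
  define p where "p = Re (\<rho>$1$1)"
  define q where "q = Re (\<rho>$2$2)"
  define wr where "wr = Re (\<rho>$1$2)"
  define wi where "wi = Im (\<rho>$1$2)"
  have "\<rho>$1$1 = cnj (\<rho>$1$1)" "\<rho>$2$2 = cnj (\<rho>$2$2)" "\<rho>$2$1 = cnj (\<rho>$1$2)"
    using H unfolding hermitian_def by blast+
  then have entries: "\<rho>$1$1 = complex_of_real p" "\<rho>$2$2 = complex_of_real q"
      "\<rho>$1$2 = Complex wr wi" "\<rho>$2$1 = Complex wr (-wi)"
    by (simp_all add: p_def q_def wr_def wi_def complex_eq_iff)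
  have pq: "p + q = 1"
    using T unfolding qtrace_def by (simp add: sum_2 entries complex_eq_iff)
  note form = psd_quadratic_form[OF P, unfolded entries]
  \<comment> \<open>At \<open>(-w, p)\<close> and \<open>(q, -w\<^sup>*)\<close> the form equals \<open>p\<close>, resp. \<open>q\<close>, times the determinant.\<close>
  have "0 \<le> p" and "0 \<le> q"
    using form[of 1 0] form[of 0 1] by simp_all
  moreover have "0 \<le> p * (p*q - wr\<^sup>2 - wi\<^sup>2)" and "0 \<le> q * (p*q - wr\<^sup>2 - wi\<^sup>2)"
    using form[of "- Complex wr wi" "complex_of_real p"]
      form[of "complex_of_real q" "- Complex wr (-wi)"]
    by (simp_all add: power2_eq_square algebra_simps)
  ultimately have det: "wr\<^sup>2 + wi\<^sup>2 \<le> p * q"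
    using pq add_nonneg_nonneg by (fastforce simp: distrib_right[symmetric])
  define r :: "real^3" where "r = vector [2 * wr, -2 * wi, p - q]"
  have r: "r$1 = 2 * wr" "r$2 = -2 * wi" "r$3 = p - q"
    by (simp_all add: r_def)
  have "(norm r)\<^sup>2 = 4 * (wr\<^sup>2 + wi\<^sup>2) + (p - q)\<^sup>2"
    unfolding norm_vec3_sq r by (simp add: power2_eq_square)
  also have "\<dots> \<le> (p + q)\<^sup>2"
    using det by (simp add: power2_eq_square algebra_simps)
  finally have "norm r \<le> 1"
    using pq by (simp add: power_le_one_iff abs_square_le_1)
  moreover have "\<rho> = bloch_state r"
  proof -
    have "q = 1 - p" using pq by simp
    then show ?thesis
      unfolding vec_eq_iff forall_2 by (simp add: bloch_state_nth r entries complex_eq_iff field_simps)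
  qed
  ultimately show ?thesis by (rule that)
qed

lemma A12_orbit_realizable_if_orthogonal:
  assumes "norm n = 1" "norm n' = 1" "n \<bullet> n' = 0" and "qubit_state \<rho>"
  shows "A12_orbit_realizable (bloch_obs n) (bloch_obs n') \<rho>"
proof -
  obtain r where r: "norm r \<le> 1" "\<rho> = bloch_state r"
    using qubit_state_obtain_bloch_vector[OF assms(4)] .
  define r2 where "r2 = reflect n' r"
  define r3 where "r3 = reflect n r2"
  define r4 where "r4 = reflect n r"
  have "norm r2 \<le> 1" "norm r3 \<le> 1" "norm r4 \<le> 1"
    using r assms by (simp_all add: r2_def r3_def r4_def norm_reflect)
  moreover have "n \<bullet> r2 = n \<bullet> r" "n \<bullet> r3 = - (n \<bullet> r)" "n \<bullet> r4 = - (n \<bullet> r)"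
      "n' \<bullet> r2 = - (n' \<bullet> r)" "n' \<bullet> r3 = - (n' \<bullet> r)" "n' \<bullet> r4 = n' \<bullet> r"
    using assms inner_commute[of n n'] by (simp_all add: r2_def r3_def r4_def inner_reflect_self
        inner_reflect_orthogonal)
  moreover have "r + r3 = r2 + r4"
    unfolding r2_def r3_def r4_def using assms(3) by (rule reflect_parallelogram)
  ultimately show ?thesis
    unfolding A12_orbit_realizable_def r(2)
    by (intro exI[of _ "bloch_state r2"] exI[of _ "bloch_state r3"] exI[of _ "bloch_state r4"] conjI
        qubit_state_bloch_state bloch_state_midpoint) (simp_all add: expect_bloch_obs_bloch_state)
qed

lemma orthogonal_if_A12_orbit_realizable_pure:
  assumes "norm n = 1"
    and "A12_orbit_realizable (bloch_obs n) (bloch_obs n') (bloch_state n)"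
  shows "n \<bullet> n' = 0"
proof -
  obtain \<rho>2 where "qubit_state \<rho>2"
    and same_M: "expect (bloch_obs n) (bloch_state n) = expect (bloch_obs n) \<rho>2"
    and flip_M': "expect (bloch_obs n') (bloch_state n) = - expect (bloch_obs n') \<rho>2"
    using assms(2) unfolding A12_orbit_realizable_def by blast
  then obtain r2 where r2: "norm r2 \<le> 1" "\<rho>2 = bloch_state r2"
    using qubit_state_obtain_bloch_vector by blast
  have "n \<bullet> r2 = 1"
    using same_M assms(1) by (simp add: r2 expect_bloch_obs_bloch_state dot_square_norm)
  then have "r2 = n"
    using eq_of_inner_eq_one r2(1) assms(1) by blast
  then show ?thesis
    using flip_M' by (simp add: r2 expect_bloch_obs_bloch_state inner_commute)
qed

theorem mainTheorem3:
  fixes n n' :: "real^3"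
  assumes "norm n = 1" and "norm n' = 1"
  shows "(\<forall>\<rho>1. qubit_state \<rho>1 \<longrightarrow> A12_orbit_realizable (bloch_obs n) (bloch_obs n') \<rho>1)
         \<longleftrightarrow> n \<bullet> n' = 0"
proof
  assume "\<forall>\<rho>1. qubit_state \<rho>1 \<longrightarrow> A12_orbit_realizable (bloch_obs n) (bloch_obs n') \<rho>1"
  moreover have "qubit_state (bloch_state n)"
    using assms(1) by (simp add: qubit_state_bloch_state)
  ultimately show "n \<bullet> n' = 0"
    using orthogonal_if_A12_orbit_realizable_pure assms(1) by blast
next
  assume "n \<bullet> n' = 0"
  then show "\<forall>\<rho>1. qubit_state \<rho>1 \<longrightarrow> A12_orbit_realizable (bloch_obs n) (bloch_obs n') \<rho>1"
    using A12_orbit_realizable_if_orthogonal assms by blast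
qed

end
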